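(* Let $d>k\geq1$, $\varepsilon\in(0,1)$, $A\succeq0$ symmetric with $\lambda_k>\lambda_{k+1}$, $\beta>0$ with $\lambda_k>2\sqrt\beta\geq\lambda_{k+1}$, $X_0\in\mathrm{St}(d,k)$ with $\cos\theta_k(U_k,X_0)>0$, and ANPM perturbations satisfying for all $t\geq0$: $\|U_{-k}^\top\Xi_t\|_2\leq c(\lambda_k-2\sqrt\beta)\varepsilon$ and $\|U_k^\top\Xi_t\|_2\leq c(\lambda_k-2\sqrt\beta)\cos\theta_k(U_k,X_t)$, $c=1/32$. Then for all $t\geq0$, $$\|G_t\|_2\leq\frac{r_+^t+\kappa r_-^t}{r_+^{t+1}+\kappa r_-^{t+1}},$$ where $r_\pm:=\frac{(1-c\Delta)\pm\sqrt{(1-c\Delta)^2-4\beta/\lambda_k^2}}{2}$ and $\kappa:=1+\frac{2c\Delta}{\sqrt{(1-c\Delta)^2-4\beta/\lambda_k^2}-c\Delta}$. Furthermore $\kappa\leq16/15$.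
   Context: $A$ has eigenvalues $\lambda_1\geq\dots\geq\lambda_d\geq0$, orthonormal eigenvectors $u_i$; $U_k:=[u_1..u_k]$, $U_{-k}:=[u_{k+1}..u_d]$, $\Lambda_k:=\mathrm{diag}(\lambda_1..\lambda_k)$. $\Delta:=(\lambda_k-2\sqrt\beta)/\lambda_k$. QR: $Y=XR$, $X^\top X=I_k$, $R$ upper triangular, nonnegative diagonal; $\theta_k(U,X):=\arccos\sigma_{\min}(U^\top X)$. ANPM: $(X_1,R_1)=\mathrm{QR}(\tfrac12AX_0+\Xi_0)$; for $t\geq1$, $Y_{t+1}=AX_t-\beta X_{t-1}R_t^{-1}+\Xi_t$, $(X_{t+1},R_{t+1})=\mathrm{QR}(Y_{t+1})$. $E_t:=\Lambda_k^{-1}(U_k^\top\Xi_t)(U_k^\top X_t)^{-1}$; $G_0:=(I_k/2+E_0)^{-1}$, $G_{t+1}:=(I_k-\beta\Lambda_k^{-1}G_t\Lambda_k^{-1}+E_{t+1})^{-1}$. *)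

theory Defs
  imports "HOL-Analysis.Analysis"
begin

definition spnorm :: "real^'n^'m \<Rightarrow> real" where
  "spnorm M = onorm (\<lambda>x. M *v x)"

definition sigma_min :: "real^'n^'n \<Rightarrow> real" where
  "sigma_min M = Inf {norm (M *v x) | x. norm x = 1}"

definition theta_k :: "real^'k^'d \<Rightarrow> real^'k^'d \<Rightarrow> real" where
  "theta_k U X = arccos (sigma_min (transpose U ** X))"

definition diagm :: "('k \<Rightarrow> real) \<Rightarrow> real^'k^'k" where
  "diagm l = (\<chi> i j. if i = j then l i else 0)"

definition is_QR :: "real^('k::{finite,linorder})^('d::finite) \<Rightarrow> real^('k::{finite,linorder})^('d::finite) \<Rightarrow> real^('k::{finite,linorder})^('k::{finite,linorder}) \<Rightarrow> bool" where
  "is_QR Y X R \<longleftrightarrow> Y = X ** R \<and> transpose X ** X = mat 1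
     \<and> (\<forall>i j. j < i \<longrightarrow> R $ i $ j = 0) \<and> (\<forall>i. R $ i $ i \<ge> 0)"

fun Gseq :: "real^'k^'k \<Rightarrow> real \<Rightarrow> (nat \<Rightarrow> real^'k^'k) \<Rightarrow> nat \<Rightarrow> real^'k^'k" where
  "Gseq Lam \<beta> E 0 = matrix_inv ((1/2) *\<^sub>R mat 1 + E 0)"
| "Gseq Lam \<beta> E (Suc t) = matrix_inv (mat 1 - \<beta> *\<^sub>R (matrix_inv Lam ** Gseq Lam \<beta> E t ** matrix_inv Lam) + E (Suc t))"

end

theory Submission
  imports Defs
begin

(*
  Since the noise bound on U_k^T Xi_t is proportional to cos theta_k(U_k, X_t) = sigma_min(U_k^T X_t),
  which is exactly what the inverse (U_k^T X_t)^-1 costs, every E_t has norm at most c Delta.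
  A perturbed-identity bound then gives ||G_0|| <= 1/(1/2 - c Delta) and
  ||G_(t+1)|| <= 1/(1 - c Delta - beta/lambda_k^2 ||G_t||), so ||G_t|| is dominated by the
  solution of this scalar Riccati recurrence. Writing it as g_t = s_t/s_(t+1) linearises it to
  s_(t+2) = (1 - c Delta) s_(t+1) - beta/lambda_k^2 s_t, whose characteristic roots are r_+ and r_-;
  kappa is the weight for which s_t = r_+^t + kappa r_-^t meets s_1 = (1/2 - c Delta) s_0.
*)

lemma spnorm_mult_vec: "norm ((M::real^'n^'m) *v x) \<le> spnorm M * norm x"
  unfolding spnorm_def by (rule onorm) simp

lemma spnorm_le:
  assumes "\<And>x. norm ((M::real^'n^'m) *v x) \<le> b * norm x"
  shows "spnorm M \<le> b"
  unfolding spnorm_def using assms by (rule onorm_le)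

lemma spnorm_nonneg: "0 \<le> spnorm (M::real^'n^'m)"
  unfolding spnorm_def by (rule onorm_pos_le) simp

lemma spnorm_matrix_mult: "spnorm ((A::real^'n^'m) ** (B::real^'k^'n)) \<le> spnorm A * spnorm B"
proof -
  have "(\<lambda>x. (A ** B) *v x) = (\<lambda>x. A *v x) \<circ> (\<lambda>x. B *v x)"
    by (simp add: o_def matrix_vector_mul_assoc)
  then show ?thesis
    unfolding spnorm_def by (simp add: onorm_compose)
qed

lemma spnorm_add: "spnorm ((A::real^'n^'m) + B) \<le> spnorm A + spnorm B"
  unfolding spnorm_def matrix_vector_mult_add_rdistrib by (rule onorm_triangle) simp_all

lemma spnorm_scaleR: "spnorm (r *\<^sub>R (A::real^'n^'m)) = \<bar>r\<bar> * spnorm A"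
  unfolding spnorm_def scaleR_matrix_vector_assoc[symmetric] by (rule onorm_scaleR) simp

lemma matrix_mult_matrix_inv:
  fixes M :: "real^'n^'n"
  assumes "inj ((*v) M)"
  shows "M ** matrix_inv M = mat 1"
proof -
  obtain B where "B ** M = mat 1"
    using assms matrix_left_invertible_injective by blast
  then have "\<exists>B. M ** B = mat 1 \<and> B ** M = mat 1"
    using matrix_left_right_inverse by blast
  then show ?thesis
    unfolding matrix_inv_def by (rule someI2_ex) simp
qed

lemma spnorm_matrix_inv_le:
  fixes M :: "real^'n^'n"
  assumes "0 < m" and bound: "\<And>x. m * norm x \<le> norm (M *v x)"
  shows "spnorm (matrix_inv M) \<le> 1 / m"
proof (rule spnorm_le)
  fix y
  have "inj ((*v) M)"
  proof (rule injI)
    fix x x' assume "M *v x = M *v x'"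
    then have "m * norm (x - x') \<le> 0"
      using bound[of "x - x'"] by (simp add: matrix_vector_mult_diff_distrib)
    then show "x = x'"
      using \<open>0 < m\<close> by (simp add: mult_le_0_iff)
  qed
  then have "M *v (matrix_inv M *v y) = y"
    by (simp add: matrix_vector_mul_assoc matrix_mult_matrix_inv)
  then have "m * norm (matrix_inv M *v y) \<le> norm y"
    using bound[of "matrix_inv M *v y"] by simp
  then show "norm (matrix_inv M *v y) \<le> 1 / m * norm y"
    using \<open>0 < m\<close> by (simp add: field_simps)
qed

lemma spnorm_matrix_inv_scaleR_id_add_le:
  fixes F :: "real^'n^'n"
  assumes "spnorm F \<le> f" "f < \<alpha>"
  shows "spnorm (matrix_inv (\<alpha> *\<^sub>R mat 1 + F)) \<le> 1 / (\<alpha> - f)"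
proof (rule spnorm_matrix_inv_le)
  fix x
  have "norm (F *v x) \<le> f * norm x"
    using spnorm_mult_vec assms(1) by (meson mult_right_mono norm_ge_zero order.trans)
  moreover have "\<alpha> * norm x \<le> norm (\<alpha> *\<^sub>R x)"
    by (simp add: abs_ge_self mult_right_mono)
  ultimately have "(\<alpha> - f) * norm x \<le> norm (\<alpha> *\<^sub>R x) - norm (F *v x)"
    by (simp add: left_diff_distrib)
  also have "\<dots> \<le> norm ((\<alpha> *\<^sub>R mat 1 + F) *v x)"
    using norm_diff_ineq[of "\<alpha> *\<^sub>R x" "F *v x"]
    by (simp add: matrix_vector_mult_add_rdistrib scaleR_matrix_vector_assoc[symmetric])
  finally show "(\<alpha> - f) * norm x \<le> norm ((\<alpha> *\<^sub>R mat 1 + F) *v x)" .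
qed (use assms in simp)

lemma norm_mult_vec_orthonormal:
  assumes "transpose X ** X = mat 1"
  shows "norm ((X::real^'k^'d) *v x) = norm x"
proof -
  have "inner (X *v x) (X *v x) = inner x x"
    by (metis assms dot_lmul_matrix matrix_vector_mul_assoc matrix_vector_mul_lid
        vector_transpose_matrix)
  then show ?thesis
    by (simp add: norm_eq_sqrt_inner)
qed

lemma norm_transpose_mult_vec_orthonormal_le:
  assumes "transpose U ** U = mat 1"
  shows "norm (transpose (U::real^'k^'d) *v v) \<le> norm v"
proof -
  let ?w = "transpose U *v v"
  have "(norm ?w)^2 = inner v (U *v ?w)"
    by (metis dot_lmul_matrix power2_norm_eq_inner transpose_transpose vector_transpose_matrix)
  also have "\<dots> \<le> norm v * norm ?w"
    using norm_cauchy_schwarz norm_mult_vec_orthonormal[OF assms] by metis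
  finally have "norm ?w * norm ?w \<le> norm v * norm ?w"
    by (simp only: power2_eq_square)
  then show ?thesis
    by (smt (verit) mult_strict_right_mono norm_ge_zero)
qed

lemma sigma_min_le_norm_mult_vec: "sigma_min (M::real^'n^'n) * norm x \<le> norm (M *v x)"
proof (cases "x = 0")
  case False
  let ?u = "(1 / norm x) *\<^sub>R x"
  have "sigma_min M \<le> norm (M *v ?u)"
    unfolding sigma_min_def
    by (rule cInf_lower) (use False in \<open>auto intro!: bdd_belowI[of _ 0]\<close>)
  also have "\<dots> = norm (M *v x) / norm x"
    by (simp add: matrix_vector_mult_scaleR)
  finally show ?thesis
    using False by (simp add: field_simps)
qed simp

lemma sigma_min_nonneg: "0 \<le> sigma_min (M::real^'n^'n)"
proof -
  obtain x :: "real^'n" where "norm x = 1"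
    using vector_choose_size[of 1] by auto
  then show ?thesis
    unfolding sigma_min_def by (intro cInf_greatest) auto
qed

lemma sigma_min_le_1:
  assumes "\<And>x. norm ((M::real^'n^'n) *v x) \<le> norm x"
  shows "sigma_min M \<le> 1"
proof -
  obtain x :: "real^'n" where "norm x = 1"
    using vector_choose_size[of 1] by auto
  then show ?thesis
    using sigma_min_le_norm_mult_vec[of M x] assms[of x] by simp
qed

lemma cos_theta_k:
  assumes "transpose U ** U = mat 1" "transpose X ** X = mat 1"
  shows "cos (theta_k U X) = sigma_min (transpose U ** X)"
proof -
  have "norm ((transpose U ** X) *v x) \<le> norm x" for x
    using norm_transpose_mult_vec_orthonormal_le[OF assms(1), of "X *v x"]
    by (simp add: matrix_vector_mul_assoc norm_mult_vec_orthonormal[OF assms(2)])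
  then have "sigma_min (transpose U ** X) \<le> 1"
    by (rule sigma_min_le_1)
  then show ?thesis
    unfolding theta_k_def using sigma_min_nonneg[of "transpose U ** X"] by (simp add: cos_arccos)
qed

lemma spnorm_matrix_inv_diagm_le:
  fixes lam :: "'n::finite \<Rightarrow> real"
  assumes "0 < l" "\<And>i. l \<le> lam i"
  shows "spnorm (matrix_inv (diagm lam)) \<le> 1 / l"
proof (rule spnorm_matrix_inv_le)
  fix x :: "real^'n"
  have norm_sq: "(norm y)^2 = (\<Sum>i\<in>UNIV. (y $ i)^2)" for y :: "real^'n"
    unfolding power2_norm_eq_inner inner_vec_def by (simp add: power2_eq_square)
  have "diagm lam *v x = (\<chi> i. lam i * x $ i)"
    by (simp add: diagm_def matrix_vector_mult_def vec_eq_iff if_distrib[of "\<lambda>a. a * _"]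
        cong: if_cong)
  then have "(norm (diagm lam *v x))^2 = (\<Sum>i\<in>UNIV. (lam i * x $ i)^2)"
    by (simp add: norm_sq)
  moreover have "(l * norm x)^2 = (\<Sum>i\<in>UNIV. (l * x $ i)^2)"
    by (simp add: norm_sq power_mult_distrib sum_distrib_left)
  moreover have "(l * x $ i)^2 \<le> (lam i * x $ i)^2" for i
    using assms by (simp add: power_mult_distrib mult_right_mono power_mono)
  ultimately have "(l * norm x)^2 \<le> (norm (diagm lam *v x))^2"
    by (simp add: sum_mono)
  then show "l * norm x \<le> norm (diagm lam *v x)"
    by (rule power2_le_imp_le) simp
qed (use assms in simp)

lemma spnorm_mult_matrix_inv_le:
  assumes "spnorm N \<le> e * sigma_min M" "0 \<le> e"
  shows "spnorm ((N::real^'n^'m) ** matrix_inv (M::real^'n^'n)) \<le> e"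
proof (cases "sigma_min M = 0")
  case True
  \<comment> \<open>M may be singular, so matrix_inv M is a junk value; but then N = 0.\<close>
  then have "spnorm N = 0"
    using assms(1) spnorm_nonneg[of N] by simp
  then show ?thesis
    using spnorm_matrix_mult[of N "matrix_inv M"] assms(2) by simp
next
  case False
  then have \<sigma>: "0 < sigma_min M"
    using sigma_min_nonneg[of M] by simp
  have "spnorm (N ** matrix_inv M) \<le> e * sigma_min M * (1 / sigma_min M)"
    using spnorm_matrix_inv_le[OF \<sigma> sigma_min_le_norm_mult_vec] spnorm_matrix_mult
      assms spnorm_nonneg
    by (meson mult_mono order.trans)
  then show ?thesis
    using \<sigma> by simp
qed

lemma spnorm_projected_noise_ratio_le:
  fixes L :: "real^'k^'k" and U X Xi :: "real^'k^'d"
  assumes "transpose U ** U = mat 1" "transpose X ** X = mat 1"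
    and "0 < l" "spnorm (matrix_inv L) \<le> 1 / l" "0 \<le> e"
    and noise: "spnorm (transpose U ** Xi) \<le> l * e * cos (theta_k U X)"
  shows "spnorm (matrix_inv L ** (transpose U ** Xi) ** matrix_inv (transpose U ** X)) \<le> e"
proof (rule spnorm_mult_matrix_inv_le[OF _ \<open>0 \<le> e\<close>])
  have "spnorm (matrix_inv L ** (transpose U ** Xi))
      \<le> 1 / l * (l * e * sigma_min (transpose U ** X))"
    using spnorm_matrix_mult assms(4) noise spnorm_nonneg
    unfolding cos_theta_k[OF assms(1,2)] by (meson mult_mono order.trans)
  then show "spnorm (matrix_inv L ** (transpose U ** Xi)) \<le> e * sigma_min (transpose U ** X)"
    using \<open>0 < l\<close> by simp
qed

lemma spnorm_Gseq_le:
  fixes Lam :: "real^'k^'k" and s :: "nat \<Rightarrow> real"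
  assumes E: "\<And>t. spnorm (E t) \<le> e"
    and Lam: "0 < l" "spnorm (matrix_inv Lam) \<le> 1 / l"
    and "0 \<le> \<beta>"
    and s_pos: "\<And>t. 0 < s t"
    and s_1: "s 1 = (1/2 - e) * s 0"
    and s_rec: "\<And>t. s (t + 2) = (1 - e) * s (t + 1) - \<beta> / l^2 * s t"
  shows "spnorm (Gseq Lam \<beta> E t) \<le> s t / s (t + 1)"
proof (induction t)
  case 0
  have "0 < (1/2 - e) * s 0"
    using s_1 s_pos[of 1] by simp
  then have "e < 1/2"
    using s_pos[of 0] by (simp add: zero_less_mult_iff)
  then have "spnorm (Gseq Lam \<beta> E 0) \<le> 1 / (1/2 - e)"
    using spnorm_matrix_inv_scaleR_id_add_le[OF E] by simp
  also have "\<dots> = s 0 / s 1"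
    using s_1 s_pos[of 0] by simp
  finally show ?case
    by simp
next
  case (Suc t)
  define g where "g = s t / s (t + 1)"
  let ?H = "matrix_inv Lam ** Gseq Lam \<beta> E t ** matrix_inv Lam"
  have "spnorm ?H \<le> 1 / l * g * (1 / l)"
    using Suc.IH Lam(2) spnorm_matrix_mult spnorm_nonneg unfolding g_def
    by (meson mult_mono order.trans)
  then have "spnorm (E (Suc t) + (- \<beta>) *\<^sub>R ?H) \<le> e + \<beta> * (1 / l * g * (1 / l))"
    using spnorm_add[of "E (Suc t)"] spnorm_scaleR[of "- \<beta>" ?H] E[of "Suc t"] \<open>0 \<le> \<beta>\<close>
    by (smt (verit) mult_left_mono)
  then have F: "spnorm (E (Suc t) + (- \<beta>) *\<^sub>R ?H) \<le> e + \<beta> / l^2 * g"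
    by (simp add: power2_eq_square)
  have ratio: "1 - (e + \<beta> / l^2 * g) = s (t + 2) / s (t + 1)"
    using s_rec[of t] s_pos[of "t + 1"] unfolding g_def by (simp add: field_simps)
  have "Gseq Lam \<beta> E (Suc t) = matrix_inv (1 *\<^sub>R mat 1 + (E (Suc t) + (- \<beta>) *\<^sub>R ?H))"
    by (simp add: algebra_simps)
  also have "spnorm \<dots> \<le> 1 / (1 - (e + \<beta> / l^2 * g))"
    by (rule spnorm_matrix_inv_scaleR_id_add_le[OF F])
      (use ratio divide_pos_pos[OF s_pos[of "t + 2"] s_pos[of "t + 1"]] in linarith)
  finally show ?case
    unfolding ratio by simp
qed

lemma power_sum_two_roots_rec:
  fixes r1 r2 k :: "'a::comm_ring_1"
  assumes "r1 + r2 = a" "r1 * r2 = p"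
  shows "r1^(t + 2) + k * r2^(t + 2) = a * (r1^(t + 1) + k * r2^(t + 1)) - p * (r1^t + k * r2^t)"
proof -
  have root: "x^(t + 2) = (r1 + r2) * x^(t + 1) - r1 * r2 * x^t" if "x = r1 \<or> x = r2" for x
    using that by (auto simp: algebra_simps)
  have "r1^(t + 2) + k * r2^(t + 2)
      = ((r1 + r2) * r1^(t + 1) - r1 * r2 * r1^t) + k * ((r1 + r2) * r2^(t + 1) - r1 * r2 * r2^t)"
    using root[of r1] root[of r2] by simp
  also have "\<dots> = (r1 + r2) * (r1^(t + 1) + k * r2^(t + 1)) - r1 * r2 * (r1^t + k * r2^t)"
    by (simp add: algebra_simps)
  finally show ?thesis
    unfolding assms .
qed

lemma quadratic_roots_sum_prod:
  fixes a q :: real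
  assumes "q \<le> a^2"
  shows "(a + sqrt (a^2 - q)) / 2 + (a - sqrt (a^2 - q)) / 2 = a"
    and "(a + sqrt (a^2 - q)) / 2 * ((a - sqrt (a^2 - q)) / 2) = q / 4"
proof -
  have "(a + sqrt (a^2 - q)) * (a - sqrt (a^2 - q)) = a^2 - (sqrt (a^2 - q))^2"
    by (simp add: power2_eq_square algebra_simps)
  then show "(a + sqrt (a^2 - q)) / 2 * ((a - sqrt (a^2 - q)) / 2) = q / 4"
    using assms by simp
qed (simp add: field_simps)

lemma anpm_discriminant_ge:
  fixes \<Delta> :: real
  assumes "0 < \<Delta>" "\<Delta> \<le> 1"
  shows "31 * (1/32 * \<Delta>) \<le> sqrt ((1 - 1/32 * \<Delta>)^2 - (1 - \<Delta>)^2)"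
proof (rule real_le_rsqrt)
  have "(1 - 1/32 * \<Delta>)^2 - (1 - \<Delta>)^2 - (31 * (1/32 * \<Delta>))^2 = 31/32 * \<Delta> * (2 - 2 * \<Delta>)"
    by (simp add: power2_eq_square algebra_simps)
  moreover have "0 \<le> 31/32 * \<Delta> * (2 - 2 * \<Delta>)"
    using assms by simp
  ultimately show "(31 * (1/32 * \<Delta>))^2 \<le> (1 - 1/32 * \<Delta>)^2 - (1 - \<Delta>)^2"
    by linarith
qed

lemma kappa_le_16_15:
  fixes e S :: real
  assumes "0 < e" "31 * e \<le> S"
  shows "1 + 2 * e / (S - e) \<le> 16/15"
  using assms by (simp add: field_simps)

lemma riccati_ratio_sequence:
  fixes e q :: real
  defines "S \<equiv> sqrt ((1 - e)^2 - q)"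
  defines "rp \<equiv> ((1 - e) + S) / 2" and "rm \<equiv> ((1 - e) - S) / 2"
    and "\<kappa> \<equiv> 1 + 2 * e / (S - e)"
  assumes "0 \<le> e" "e \<le> 1" "0 \<le> q" "e < S"
  shows "0 < rp^t + \<kappa> * rm^t"
    and "rp + \<kappa> * rm = (1/2 - e) * (1 + \<kappa>)"
    and "rp^(t + 2) + \<kappa> * rm^(t + 2)
      = (1 - e) * (rp^(t + 1) + \<kappa> * rm^(t + 1)) - q / 4 * (rp^t + \<kappa> * rm^t)"
proof -
  have "S \<le> sqrt ((1 - e)^2)"
    unfolding S_def using \<open>0 \<le> q\<close> by (intro real_sqrt_le_mono) simp
  then have "S \<le> 1 - e"
    using \<open>e \<le> 1\<close> by simp
  then have "0 \<le> rm" "0 < rp"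
    unfolding rm_def rp_def using \<open>0 \<le> e\<close> \<open>e < S\<close> by auto
  moreover have "0 \<le> 2 * e / (S - e)"
    using \<open>0 \<le> e\<close> \<open>e < S\<close> by simp
  then have "0 < \<kappa>"
    unfolding \<kappa>_def by linarith
  ultimately show "0 < rp^t + \<kappa> * rm^t"
    by (simp add: add_pos_nonneg)
  have "\<kappa> = (S + e) / (S - e)"
    unfolding \<kappa>_def using \<open>e < S\<close> by (simp add: field_simps)
  then show "rp + \<kappa> * rm = (1/2 - e) * (1 + \<kappa>)"
    unfolding rp_def rm_def using \<open>e < S\<close> by (simp add: field_simps)
  have "q \<le> (1 - e)^2"
    using \<open>0 \<le> e\<close> \<open>e < S\<close> real_sqrt_gt_0_iff[of "(1 - e)^2 - q"] unfolding S_def by linarith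
  from power_sum_two_roots_rec[OF quadratic_roots_sum_prod[OF this]]
  show "rp^(t + 2) + \<kappa> * rm^(t + 2)
      = (1 - e) * (rp^(t + 1) + \<kappa> * rm^(t + 1)) - q / 4 * (rp^t + \<kappa> * rm^t)"
    unfolding rp_def rm_def S_def .
qed

theorem lemma4:
  fixes A :: "real^'d^'d"
    and Uk :: "real^('k::{finite,linorder})^'d" and Um :: "real^'m^'d"
    and lam :: "('k::{finite,linorder}) \<Rightarrow> real" and mu :: "'m \<Rightarrow> real"
    and \<beta> \<epsilon> :: real
    and X :: "nat \<Rightarrow> real^('k::{finite,linorder})^'d" and R :: "nat \<Rightarrow> real^('k::{finite,linorder})^('k::{finite,linorder})"
    and Xi :: "nat \<Rightarrow> real^('k::{finite,linorder})^'d"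
  defines "lamk \<equiv> Min (range lam)"
    and "lamk1 \<equiv> Max (range mu)"
    and "c \<equiv> (1/32 :: real)"
  defines "\<Delta> \<equiv> (lamk - 2 * sqrt \<beta>) / lamk"
  defines "Lam \<equiv> diagm lam"
  defines "E \<equiv> (\<lambda>t. matrix_inv Lam ** (transpose Uk ** Xi t) ** matrix_inv (transpose Uk ** X t))"
  defines "rp \<equiv> ((1 - c*\<Delta>) + sqrt ((1 - c*\<Delta>)^2 - 4*\<beta>/lamk^2)) / 2"
    and "rm \<equiv> ((1 - c*\<Delta>) - sqrt ((1 - c*\<Delta>)^2 - 4*\<beta>/lamk^2)) / 2"
    and "\<kappa> \<equiv> 1 + 2*c*\<Delta> / (sqrt ((1 - c*\<Delta>)^2 - 4*\<beta>/lamk^2) - c*\<Delta>)"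
  assumes dims: "CARD('k) + CARD('m) = CARD('d)"
    and symA: "transpose A = A"
    and Uk_orth: "transpose Uk ** Uk = mat 1"
    and Um_orth: "transpose Um ** Um = mat 1"
    and UkUm: "transpose Uk ** Um = 0"
    and eig_k: "A ** Uk = Uk ** diagm lam"
    and eig_m: "A ** Um = Um ** diagm mu"
    and lam_sorted: "\<And>i j. i \<le> j \<Longrightarrow> lam j \<le> lam i"
    and lam_ge_mu: "\<And>i j. mu j \<le> lam i"
    and psd: "\<And>j. mu j \<ge> 0"
    and gap: "lamk > lamk1"
    and eps: "0 < \<epsilon>" "\<epsilon> < 1"
    and beta: "\<beta> > 0" "lamk > 2 * sqrt \<beta>" "2 * sqrt \<beta> \<ge> lamk1"
    and X0: "transpose (X 0) ** X 0 = mat 1"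
    and cos0: "cos (theta_k Uk (X 0)) > 0"
    and step1: "is_QR ((1/2) *\<^sub>R (A ** X 0) + Xi 0) (X 1) (R 1)"
    and step: "\<And>t. t \<ge> 1 \<Longrightarrow>
        is_QR (A ** X t - \<beta> *\<^sub>R (X (t - 1) ** matrix_inv (R t)) + Xi t) (X (t + 1)) (R (t + 1))"
    and noise_m: "\<And>t. spnorm (transpose Um ** Xi t) \<le> c * (lamk - 2 * sqrt \<beta>) * \<epsilon>"
    and noise_k: "\<And>t. spnorm (transpose Uk ** Xi t) \<le> c * (lamk - 2 * sqrt \<beta>) * cos (theta_k Uk (X t))"
  shows "(\<forall>t. spnorm (Gseq Lam \<beta> E t) \<le> (rp^t + \<kappa> * rm^t) / (rp^(t+1) + \<kappa> * rm^(t+1)))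
         \<and> \<kappa> \<le> 16/15"
proof -
  have lamk_pos: "0 < lamk"
    using beta(1,2) real_sqrt_gt_zero[of \<beta>] by linarith
  have \<Delta>: "0 < \<Delta>" "\<Delta> \<le> 1"
    unfolding \<Delta>_def using beta(1,2) lamk_pos by (auto simp: field_simps)
  have "4 * \<beta> / lamk^2 = (1 - \<Delta>)^2"
    unfolding \<Delta>_def using beta(1) lamk_pos by (simp add: field_simps power2_eq_square)
  then have disc: "31 * (c * \<Delta>) \<le> sqrt ((1 - c * \<Delta>)^2 - 4 * \<beta> / lamk^2)"
    unfolding c_def using anpm_discriminant_ge[OF \<Delta>] by simp
  have cD: "0 < c * \<Delta>" "c * \<Delta> \<le> 1"
    unfolding c_def using \<Delta> by auto
  have \<kappa>_eq: "\<kappa> = 1 + 2 * (c * \<Delta>) / (sqrt ((1 - c * \<Delta>)^2 - 4 * \<beta> / lamk^2) - c * \<Delta>)"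
    unfolding \<kappa>_def by simp
  note s = riccati_ratio_sequence[of "c * \<Delta>" "4 * \<beta> / lamk^2", folded rp_def rm_def \<kappa>_eq]
  have Lam: "spnorm (matrix_inv Lam) \<le> 1 / lamk"
    unfolding Lam_def lamk_def by (rule spnorm_matrix_inv_diagm_le) (use lamk_pos lamk_def in auto)
  have X_orth: "transpose (X t) ** X t = mat 1" for t
    using X0 step1 step[of "t - 1"] unfolding is_QR_def
    by (cases "t < 2") (auto simp: less_2_cases_iff)
  have E: "spnorm (E t) \<le> c * \<Delta>" for t
    unfolding E_def using noise_k[of t] lamk_pos cD
    by (intro spnorm_projected_noise_ratio_le[OF Uk_orth X_orth lamk_pos Lam]) (simp_all add: \<Delta>_def)
  have "spnorm (Gseq Lam \<beta> E t) \<le> (rp^t + \<kappa> * rm^t) / (rp^(t+1) + \<kappa> * rm^(t+1))" for t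
    by (rule spnorm_Gseq_le[OF E lamk_pos Lam]) (use s disc cD beta(1) in auto)
  moreover have "\<kappa> \<le> 16/15"
    using kappa_le_16_15[OF cD(1) disc, folded \<kappa>_eq] .
  ultimately show ?thesis
    by blast
qed

end
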